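(* Let $t$ be a $\lambda\mu$-term and $y$ a $\lambda$-variable. If $(t\;y)$ is normalizable, then $t$ is normalizable.
   Context: $\lambda\mu$-terms: $t::= x\mid \lambda x.t\mid (t\;t)\mid \mu a.t\mid (a\;t)$ over disjoint infinite sets of $\lambda$-variables and $\mu$-variables. Reduction $(\lambda x.u\;v)\triangleright u[x:=v]$, $(\mu a.u\;v)\triangleright\mu a.u[a:=^*v]$ ($u[a:=^*v]$ replaces each subterm $(a\;w)$ of $u$ by $(a\;(w\;v))$); a term is normalizable if it reduces (by the compatible closure of these rules) to a normal form. *)

theory Defs
  imports Main
begin

text \<open>Lambda-mu terms in de Bruijn style, with two separate
index spaces: Var i refers to lambda-binders (Lam), MApp a t refers to mu-binders (Mu).\<close>

datatype trm = Var nat | Lam trm | App trm trm | Mu trm | MApp nat trm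

fun liftL :: "nat \<Rightarrow> trm \<Rightarrow> trm" where
  "liftL k (Var i) = (if i < k then Var i else Var (Suc i))"
| "liftL k (Lam t) = Lam (liftL (Suc k) t)"
| "liftL k (App t u) = App (liftL k t) (liftL k u)"
| "liftL k (Mu t) = Mu (liftL k t)"
| "liftL k (MApp a t) = MApp a (liftL k t)"

fun liftM :: "nat \<Rightarrow> trm \<Rightarrow> trm" where
  "liftM k (Var i) = Var i"
| "liftM k (Lam t) = Lam (liftM k t)"
| "liftM k (App t u) = App (liftM k t) (liftM k u)"
| "liftM k (Mu t) = Mu (liftM (Suc k) t)"
| "liftM k (MApp a t) = MApp (if a < k then a else Suc a) (liftM k t)"

fun substL :: "trm \<Rightarrow> nat \<Rightarrow> trm \<Rightarrow> trm" where
  "substL (Var i) k s = (if i < k then Var i else if i = k then s else Var (i - 1))"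
| "substL (Lam t) k s = Lam (substL t (Suc k) (liftL 0 s))"
| "substL (App t u) k s = App (substL t k s) (substL u k s)"
| "substL (Mu t) k s = Mu (substL t k (liftM 0 s))"
| "substL (MApp a t) k s = MApp a (substL t k s)"

fun msubst :: "trm \<Rightarrow> nat \<Rightarrow> trm \<Rightarrow> trm" where
  "msubst (Var i) k v = Var i"
| "msubst (Lam t) k v = Lam (msubst t k (liftL 0 v))"
| "msubst (App t u) k v = App (msubst t k v) (msubst u k v)"
| "msubst (Mu t) k v = Mu (msubst t (Suc k) (liftM 0 v))"
| "msubst (MApp a t) k v =
     (if a = k then MApp a (App (msubst t k v) v) else MApp a (msubst t k v))"

inductive red1 :: "trm \<Rightarrow> trm \<Rightarrow> bool" where
  beta: "red1 (App (Lam u) v) (substL u 0 v)"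
| mu:   "red1 (App (Mu u) v) (Mu (msubst u 0 (liftM 0 v)))"
| lam:  "red1 t t' \<Longrightarrow> red1 (Lam t) (Lam t')"
| appL: "red1 t t' \<Longrightarrow> red1 (App t u) (App t' u)"
| appR: "red1 u u' \<Longrightarrow> red1 (App t u) (App t u')"
| muC:  "red1 t t' \<Longrightarrow> red1 (Mu t) (Mu t')"
| mapp: "red1 t t' \<Longrightarrow> red1 (MApp a t) (MApp a t')"

definition normal :: "trm \<Rightarrow> bool" where
  "normal t \<longleftrightarrow> (\<nexists>t'. red1 t t')"

definition normalizable :: "trm \<Rightarrow> bool" where
  "normalizable t \<longleftrightarrow> (\<exists>u. red1\<^sup>*\<^sup>* t u \<and> normal u)"

end

theory Submission
  imports Defs
begin

text \<open>Relate \<open>t\<close> to the reducts \<open>v\<close> of \<open>(t y)\<close> by a simulation: \<open>v\<close> is \<open>t\<close> applied to \<open>y\<close>,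
except that the head redex of \<open>(t y)\<close> may already have been contracted. After a \<open>\<beta>\<close>-step the
bound variable of \<open>t\<close> stands for \<open>y\<close>; after a \<open>\<mu>\<close>-step \<open>(\<mu>a.u) y \<triangleright> \<mu>a.u[a:=\<^sup>*y]\<close> the
\<open>\<mu>\<close>-variable \<open>a\<close> is marked with \<open>y\<close>, and each \<open>(a w)\<close> of \<open>t\<close> corresponds to \<open>(a (w' y))\<close>
in \<open>v\<close>, recursively. Every step of \<open>v\<close> is either mirrored by a step of \<open>t\<close> or is one of
these administrative contractions, and a term related to a normal form is normal.
Following a normalizing reduction of \<open>(t y)\<close> thus yields one of \<open>t\<close>.\<close>

fun renL :: "(nat \<Rightarrow> nat) \<Rightarrow> trm \<Rightarrow> trm" where
  "renL \<sigma> (Var i) = Var (\<sigma> i)"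
| "renL \<sigma> (Lam t) = Lam (renL (case_nat 0 (Suc \<circ> \<sigma>)) t)"
| "renL \<sigma> (App t u) = App (renL \<sigma> t) (renL \<sigma> u)"
| "renL \<sigma> (Mu t) = Mu (renL \<sigma> t)"
| "renL \<sigma> (MApp a t) = MApp a (renL \<sigma> t)"

definition shift_idx :: "nat \<Rightarrow> nat \<Rightarrow> nat" where
  "shift_idx k i = (if i < k then i else Suc i)"

definition unshift_idx :: "nat \<Rightarrow> nat \<Rightarrow> nat" where
  "unshift_idx k i = (if i < k then i else i - 1)"

lemma liftL_eq_renL: "liftL k t = renL (shift_idx k) t"
proof (induction t arbitrary: k)
  case (Lam t)
  have "case_nat 0 (Suc \<circ> shift_idx k) = shift_idx (Suc k)"
    by (auto simp: shift_idx_def fun_eq_iff split: nat.split)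
  then show ?case using Lam by simp
qed (auto simp: shift_idx_def)

lemma shift_idx_simps [simp]:
  "shift_idx 0 i = Suc i"
  "shift_idx (Suc k) 0 = 0"
  "shift_idx (Suc k) (Suc i) = Suc (shift_idx k i)"
  by (simp_all add: shift_idx_def)

lemma liftL_0_eq_renL_Suc: "liftL 0 t = renL Suc t"
proof -
  have "shift_idx 0 = Suc"
    by (simp add: fun_eq_iff)
  then show ?thesis by (simp add: liftL_eq_renL)
qed

lemma substL_Var_eq_renL:
  "substL t k (Var j) = renL (\<lambda>i. if i = k then j else unshift_idx k i) t"
proof (induction t arbitrary: k j)
  case (Lam t)
  have "case_nat 0 (Suc \<circ> (\<lambda>i. if i = k then j else unshift_idx k i))
      = (\<lambda>i. if i = Suc k then Suc j else unshift_idx (Suc k) i)"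
    by (auto simp: unshift_idx_def fun_eq_iff split: nat.split)
  then show ?case using Lam by (simp add: liftL_0_eq_renL_Suc)
qed (auto simp: unshift_idx_def)

lemma renL_ident: "renL (\<lambda>i. i) t = t"
proof (induction t)
  case (Lam t)
  have "case_nat 0 (Suc \<circ> (\<lambda>i. i)) = (\<lambda>i. i)"
    by (auto simp: fun_eq_iff split: nat.split)
  then show ?case using Lam by simp
qed auto

text \<open>\<open>sim \<rho> m u v\<close>: \<open>v\<close> is \<open>u\<close> with free \<open>\<lambda>\<close>-variables renamed by \<open>\<rho>\<close>, where each
\<open>\<mu>\<close>-variable \<open>b\<close> with \<open>m b = Some j\<close> has absorbed the argument \<open>x\<^sub>j\<close>.
\<open>sim_app \<rho> m j u v\<close>: \<open>v\<close> corresponds to \<open>(u x\<^sub>j)\<close>, possibly with its head redex contracted.\<close>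

inductive sim :: "(nat \<Rightarrow> nat) \<Rightarrow> (nat \<Rightarrow> nat option) \<Rightarrow> trm \<Rightarrow> trm \<Rightarrow> bool"
  and sim_app :: "(nat \<Rightarrow> nat) \<Rightarrow> (nat \<Rightarrow> nat option) \<Rightarrow> nat \<Rightarrow> trm \<Rightarrow> trm \<Rightarrow> bool" where
  sim_Var: "sim \<rho> m (Var i) (Var (\<rho> i))"
| sim_Lam: "sim (case_nat 0 (Suc \<circ> \<rho>)) (map_option Suc \<circ> m) p q \<Longrightarrow> sim \<rho> m (Lam p) (Lam q)"
| sim_App: "sim \<rho> m p q \<Longrightarrow> sim \<rho> m p' q' \<Longrightarrow> sim \<rho> m (App p p') (App q q')"
| sim_Mu: "sim \<rho> (case_nat None m) p q \<Longrightarrow> sim \<rho> m (Mu p) (Mu q)"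
| sim_MApp: "m b = None \<Longrightarrow> sim \<rho> m p q \<Longrightarrow> sim \<rho> m (MApp b p) (MApp b q)"
| sim_MApp_marked: "m b = Some j \<Longrightarrow> sim_app \<rho> m j p q \<Longrightarrow> sim \<rho> m (MApp b p) (MApp b q)"
| sim_app_App: "sim \<rho> m p q \<Longrightarrow> sim_app \<rho> m j p (App q (Var j))"
| sim_app_Lam: "sim (case_nat j \<rho>) m p q \<Longrightarrow> sim_app \<rho> m j (Lam p) q"
| sim_app_Mu: "sim \<rho> (case_nat (Some j) m) p q \<Longrightarrow> sim_app \<rho> m j (Mu p) (Mu q)"

lemma sim_renL:
  shows "sim \<rho> m p q \<Longrightarrow> (\<And>i. \<rho>' (\<tau> i) = \<sigma> (\<rho> i)) \<Longrightarrow> (\<And>b. m' b = map_option \<sigma> (m b))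
      \<Longrightarrow> sim \<rho>' m' (renL \<tau> p) (renL \<sigma> q)"
    and "sim_app \<rho> m j p q \<Longrightarrow> (\<And>i. \<rho>' (\<tau> i) = \<sigma> (\<rho> i)) \<Longrightarrow> (\<And>b. m' b = map_option \<sigma> (m b))
      \<Longrightarrow> sim_app \<rho>' m' (\<sigma> j) (renL \<tau> p) (renL \<sigma> q)"
proof (induction arbitrary: \<rho>' m' \<tau> \<sigma> and \<rho>' m' \<tau> \<sigma> rule: sim_sim_app.inducts)
  case (sim_Var \<rho> m i)
  show ?case using sim_sim_app.sim_Var[of \<rho>' m' "\<tau> i"] sim_Var.prems(1) by simp
next
  case (sim_Lam \<rho> m p q)
  have "sim (case_nat 0 (Suc \<circ> \<rho>')) (map_option Suc \<circ> m')
      (renL (case_nat 0 (Suc \<circ> \<tau>)) p) (renL (case_nat 0 (Suc \<circ> \<sigma>)) q)"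
    by (rule sim_Lam.IH) (auto simp: sim_Lam.prems option.map_comp o_def split: nat.split)
  then show ?case by (simp add: sim_sim_app.sim_Lam)
next
  case (sim_Mu \<rho> m p q)
  have "sim \<rho>' (case_nat None m') (renL \<tau> p) (renL \<sigma> q)"
    by (rule sim_Mu.IH) (auto simp: sim_Mu.prems split: nat.split)
  then show ?case by (simp add: sim_sim_app.sim_Mu)
next
  case (sim_app_Lam j \<rho> m p q)
  have "sim (case_nat (\<sigma> j) \<rho>') m' (renL (case_nat 0 (Suc \<circ> \<tau>)) p) (renL \<sigma> q)"
    by (rule sim_app_Lam.IH) (auto simp: sim_app_Lam.prems split: nat.split)
  then show ?case by (simp add: sim_sim_app.sim_app_Lam)
next
  case (sim_app_Mu \<rho> j m p q)
  have "sim \<rho>' (case_nat (Some (\<sigma> j)) m') (renL \<tau> p) (renL \<sigma> q)"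
    by (rule sim_app_Mu.IH) (auto simp: sim_app_Mu.prems split: nat.split)
  then show ?case by (simp add: sim_sim_app.sim_app_Mu)
qed (auto intro: sim_sim_app.intros)

lemma sim_liftL_0:
  "sim \<rho> m s s' \<Longrightarrow> sim (case_nat 0 (Suc \<circ> \<rho>)) (map_option Suc \<circ> m) (liftL 0 s) (liftL 0 s')"
  unfolding liftL_0_eq_renL_Suc by (rule sim_renL) (auto simp: option.map_comp)

lemma sim_liftL_0_left: "sim \<rho> m s s' \<Longrightarrow> sim (case_nat j \<rho>) m (liftL 0 s) s'"
  using sim_renL(1)[of \<rho> m s s' "case_nat j \<rho>" Suc "\<lambda>i. i" m]
  by (simp add: liftL_0_eq_renL_Suc renL_ident option.map_ident)

lemma liftM_MApp_shift_idx: "liftM k (MApp a t) = MApp (shift_idx k a) (liftM k t)"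
  by (simp add: shift_idx_def)

lemma sim_liftM:
  shows "sim \<rho> m p q \<Longrightarrow> (\<And>b. m' (shift_idx k b) = m b) \<Longrightarrow> sim \<rho> m' (liftM k p) (liftM k q)"
    and "sim_app \<rho> m j p q \<Longrightarrow> (\<And>b. m' (shift_idx k b) = m b)
      \<Longrightarrow> sim_app \<rho> m' j (liftM k p) (liftM k q)"
proof (induction arbitrary: k m' and k m' rule: sim_sim_app.inducts)
  case (sim_Lam \<rho> m p q)
  have "sim (case_nat 0 (Suc \<circ> \<rho>)) (map_option Suc \<circ> m') (liftM k p) (liftM k q)"
    by (rule sim_Lam.IH) (simp add: sim_Lam.prems)
  then show ?case by (simp add: sim_sim_app.sim_Lam)
next
  case (sim_Mu \<rho> m p q)
  have "sim \<rho> (case_nat None m') (liftM (Suc k) p) (liftM (Suc k) q)"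
    by (rule sim_Mu.IH) (simp add: sim_Mu.prems split: nat.split)
  then show ?case by (simp add: sim_sim_app.sim_Mu)
next
  case (sim_MApp m b \<rho> p q)
  have "m' (shift_idx k b) = None" "sim \<rho> m' (liftM k p) (liftM k q)"
    using sim_MApp by simp_all
  then show ?case
    unfolding liftM_MApp_shift_idx by (rule sim_sim_app.sim_MApp)
next
  case (sim_MApp_marked m b j \<rho> p q)
  have "m' (shift_idx k b) = Some j" "sim_app \<rho> m' j (liftM k p) (liftM k q)"
    using sim_MApp_marked by simp_all
  then show ?case
    unfolding liftM_MApp_shift_idx by (rule sim_sim_app.sim_MApp_marked)
next
  case (sim_app_Mu \<rho> j m p q)
  have "sim \<rho> (case_nat (Some j) m') (liftM (Suc k) p) (liftM (Suc k) q)"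
    by (rule sim_app_Mu.IH) (simp add: sim_app_Mu.prems split: nat.split)
  then show ?case by (simp add: sim_sim_app.sim_app_Mu)
qed (auto intro: sim_sim_app.intros)

lemma sim_liftM_0: "sim \<rho> m s s' \<Longrightarrow> sim \<rho> (case_nat x m) (liftM 0 s) (liftM 0 s')"
  by (erule sim_liftM(1)) simp

lemma sim_msubst_Var:
  shows "sim \<rho> m p q \<Longrightarrow> m c = None \<Longrightarrow> m' c = Some j \<Longrightarrow> (\<And>b. b \<noteq> c \<Longrightarrow> m' b = m b)
      \<Longrightarrow> sim \<rho> m' p (msubst q c (Var j))"
    and "sim_app \<rho> m i p q \<Longrightarrow> m c = None \<Longrightarrow> m' c = Some j \<Longrightarrow> (\<And>b. b \<noteq> c \<Longrightarrow> m' b = m b)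
      \<Longrightarrow> sim_app \<rho> m' i p (msubst q c (Var j))"
proof (induction arbitrary: m' c j and m' c j rule: sim_sim_app.inducts)
  case (sim_Var \<rho> m i)
  then show ?case by (simp add: sim_sim_app.sim_Var)
next
  case (sim_Lam \<rho> m p q)
  have "sim (case_nat 0 (Suc \<circ> \<rho>)) (map_option Suc \<circ> m') p (msubst q c (Var (Suc j)))"
    by (rule sim_Lam.IH) (simp_all add: sim_Lam.prems)
  then show ?case by (simp add: sim_sim_app.sim_Lam)
next
  case (sim_App \<rho> m p q p' q')
  then show ?case by (simp add: sim_sim_app.sim_App)
next
  case (sim_Mu \<rho> m p q)
  have "sim \<rho> (case_nat None m') p (msubst q (Suc c) (Var j))"
    by (rule sim_Mu.IH) (auto simp: sim_Mu.prems split: nat.split)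
  then show ?case by (simp add: sim_sim_app.sim_Mu)
next
  case (sim_MApp m b \<rho> p q)
  have IH: "sim \<rho> m' p (msubst q c (Var j))"
    using sim_MApp by blast
  show ?case
  proof (cases "b = c")
    case True
    then show ?thesis
      using IH sim_MApp.prems by (simp add: sim_sim_app.sim_MApp_marked sim_sim_app.sim_app_App)
  next
    case False
    then show ?thesis
      using IH sim_MApp by (simp add: sim_sim_app.sim_MApp)
  qed
next
  case (sim_MApp_marked m b i \<rho> p q)
  then have "b \<noteq> c" by auto
  with sim_MApp_marked show ?case
    by (simp add: sim_sim_app.sim_MApp_marked)
next
  case (sim_app_App \<rho> m p q i)
  then show ?case by (simp add: sim_sim_app.sim_app_App)
next
  case (sim_app_Lam i \<rho> m p q)
  then show ?case by (simp add: sim_sim_app.sim_app_Lam)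
next
  case (sim_app_Mu \<rho> i m p q)
  have "sim \<rho> (case_nat (Some i) m') p (msubst q (Suc c) (Var j))"
    by (rule sim_app_Mu.IH) (auto simp: sim_app_Mu.prems split: nat.split)
  then show ?case by (simp add: sim_sim_app.sim_app_Mu)
qed

lemma sim_msubst:
  shows "sim \<rho> m p q \<Longrightarrow> m c = None \<Longrightarrow> sim \<rho> m s s'
      \<Longrightarrow> sim \<rho> m (msubst p c s) (msubst q c s')"
    and "sim_app \<rho> m j p q \<Longrightarrow> m c = None \<Longrightarrow> sim \<rho> m s s'
      \<Longrightarrow> sim_app \<rho> m j (msubst p c s) (msubst q c s')"
proof (induction arbitrary: c s s' and c s s' rule: sim_sim_app.inducts)
  case (sim_Lam \<rho> m p q)
  have "sim (case_nat 0 (Suc \<circ> \<rho>)) (map_option Suc \<circ> m)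
      (msubst p c (liftL 0 s)) (msubst q c (liftL 0 s'))"
    using sim_Lam.prems by (intro sim_Lam.IH sim_liftL_0) simp_all
  then show ?case by (simp add: sim_sim_app.sim_Lam)
next
  case (sim_Mu \<rho> m p q)
  have "sim \<rho> (case_nat None m) (msubst p (Suc c) (liftM 0 s)) (msubst q (Suc c) (liftM 0 s'))"
    using sim_Mu.prems by (intro sim_Mu.IH sim_liftM_0) simp_all
  then show ?case by (simp add: sim_sim_app.sim_Mu)
next
  case (sim_MApp m b \<rho> p q)
  have "sim \<rho> m (msubst p c s) (msubst q c s')"
    using sim_MApp by blast
  with sim_MApp show ?case
    by (simp add: sim_sim_app.sim_MApp sim_sim_app.sim_App)
next
  case (sim_MApp_marked m b j \<rho> p q)
  then have "b \<noteq> c" by auto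
  with sim_MApp_marked show ?case
    by (simp add: sim_sim_app.sim_MApp_marked)
next
  case (sim_app_Lam j \<rho> m p q)
  have "sim (case_nat j \<rho>) m (msubst p c (liftL 0 s)) (msubst q c s')"
    using sim_app_Lam.prems by (intro sim_app_Lam.IH sim_liftL_0_left) simp_all
  then show ?case by (simp add: sim_sim_app.sim_app_Lam)
next
  case (sim_app_Mu \<rho> j m p q)
  have "sim \<rho> (case_nat (Some j) m) (msubst p (Suc c) (liftM 0 s)) (msubst q (Suc c) (liftM 0 s'))"
    using sim_app_Mu.prems by (intro sim_app_Mu.IH sim_liftM_0) simp_all
  then show ?case by (simp add: sim_sim_app.sim_app_Mu)
qed (simp_all add: sim_sim_app.intros)

lemma substL_Var_unshift_idx: "substL (Var i) k s = (if i = k then s else Var (unshift_idx k i))"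
  by (simp add: unshift_idx_def)

lemma sim_substL:
  shows "sim \<rho> m p q \<Longrightarrow> \<rho> k = k' \<Longrightarrow> (\<And>i. i \<noteq> k \<Longrightarrow> \<rho> i \<noteq> k') \<Longrightarrow> (\<And>b. m b \<noteq> Some k')
      \<Longrightarrow> (\<And>i. \<rho>' i = unshift_idx k' (\<rho> (shift_idx k i)))
      \<Longrightarrow> (\<And>b. m' b = map_option (unshift_idx k') (m b)) \<Longrightarrow> sim \<rho>' m' s s'
      \<Longrightarrow> sim \<rho>' m' (substL p k s) (substL q k' s')"
    and "sim_app \<rho> m j p q \<Longrightarrow> \<rho> k = k' \<Longrightarrow> (\<And>i. i \<noteq> k \<Longrightarrow> \<rho> i \<noteq> k') \<Longrightarrow> (\<And>b. m b \<noteq> Some k')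
      \<Longrightarrow> (\<And>i. \<rho>' i = unshift_idx k' (\<rho> (shift_idx k i)))
      \<Longrightarrow> (\<And>b. m' b = map_option (unshift_idx k') (m b)) \<Longrightarrow> sim \<rho>' m' s s' \<Longrightarrow> j \<noteq> k'
      \<Longrightarrow> sim_app \<rho>' m' (unshift_idx k' j) (substL p k s) (substL q k' s')"
proof (induction arbitrary: k k' \<rho>' m' s s' and k k' \<rho>' m' s s' rule: sim_sim_app.inducts)
  case (sim_Var \<rho> m i)
  show ?case
  proof (cases "i = k")
    case True
    then show ?thesis using sim_Var.prems by simp
  next
    case False
    define i' where "i' = unshift_idx k i"
    have "shift_idx k i' = i"
      using False by (auto simp: shift_idx_def unshift_idx_def i'_def)
    then have "sim \<rho>' m' (Var i') (Var (unshift_idx k' (\<rho> i)))"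
      using sim_sim_app.sim_Var[of \<rho>' m' i'] sim_Var.prems(4) by simp
    moreover have "\<rho> i \<noteq> k'"
      using False sim_Var.prems(2) by blast
    ultimately show ?thesis
      using False by (simp del: substL.simps add: substL_Var_unshift_idx i'_def)
  qed
next
  case (sim_Lam \<rho> m p q)
  have "sim (case_nat 0 (Suc \<circ> \<rho>')) (map_option Suc \<circ> m')
      (substL p (Suc k) (liftL 0 s)) (substL q (Suc k') (liftL 0 s'))"
  proof (rule sim_Lam.IH)
    fix i
    show "case_nat 0 (Suc \<circ> \<rho>') i
        = unshift_idx (Suc k') (case_nat 0 (Suc \<circ> \<rho>) (shift_idx (Suc k) i))"
    proof (cases i)
      case (Suc i0)
      have "\<rho> (shift_idx k i0) \<noteq> k'"
        by (rule sim_Lam.prems(2)) (simp add: shift_idx_def)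
      then show ?thesis
        using Suc sim_Lam.prems(4) by (auto simp: unshift_idx_def)
    qed (simp add: unshift_idx_def)
  next
    fix b
    show "(map_option Suc \<circ> m') b = map_option (unshift_idx (Suc k')) ((map_option Suc \<circ> m) b)"
      using sim_Lam.prems(3)[of b] sim_Lam.prems(5)[of b]
      by (cases "m b") (auto simp: unshift_idx_def)
  next
    show "sim (case_nat 0 (Suc \<circ> \<rho>')) (map_option Suc \<circ> m') (liftL 0 s) (liftL 0 s')"
      using sim_Lam.prems(6) by (rule sim_liftL_0)
  qed (use sim_Lam.prems in \<open>auto split: nat.split\<close>)
  then show ?case by (simp add: sim_sim_app.sim_Lam)
next
  case (sim_App \<rho> m p q p' q')
  then show ?case by (simp add: sim_sim_app.sim_App)
next
  case (sim_Mu \<rho> m p q)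
  have "sim \<rho>' (case_nat None m') (substL p k (liftM 0 s)) (substL q k' (liftM 0 s'))"
  proof (rule sim_Mu.IH)
    show "sim \<rho>' (case_nat None m') (liftM 0 s) (liftM 0 s')"
      using sim_Mu.prems(6) by (rule sim_liftM_0)
  qed (use sim_Mu.prems in \<open>auto split: nat.split\<close>)
  then show ?case by (simp add: sim_sim_app.sim_Mu)
next
  case (sim_MApp m b \<rho> p q)
  then show ?case by (simp add: sim_sim_app.sim_MApp)
next
  case (sim_MApp_marked m b j \<rho> p q)
  then have "j \<noteq> k'" by metis
  with sim_MApp_marked show ?case by (simp add: sim_sim_app.sim_MApp_marked)
next
  case (sim_app_App \<rho> m p q j)
  have "sim \<rho>' m' (substL p k s) (substL q k' s')"
    using sim_app_App.prems(1-6) by (rule sim_app_App.IH)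
  then have "sim_app \<rho>' m' (unshift_idx k' j) (substL p k s)
      (App (substL q k' s') (Var (unshift_idx k' j)))"
    by (rule sim_sim_app.sim_app_App)
  then show ?case
    using sim_app_App.prems(7) by (simp add: unshift_idx_def split: if_split_asm)
next
  case (sim_app_Lam j \<rho> m p q)
  have "sim (case_nat (unshift_idx k' j) \<rho>') m' (substL p (Suc k) (liftL 0 s)) (substL q k' s')"
  proof (rule sim_app_Lam.IH)
    fix i
    show "case_nat (unshift_idx k' j) \<rho>' i = unshift_idx k' (case_nat j \<rho> (shift_idx (Suc k) i))"
      using sim_app_Lam.prems(4) by (cases i) simp_all
  next
    show "sim (case_nat (unshift_idx k' j) \<rho>') m' (liftL 0 s) s'"
      using sim_app_Lam.prems(6) by (rule sim_liftL_0_left)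
  qed (use sim_app_Lam.prems in \<open>auto split: nat.split\<close>)
  then show ?case by (simp add: sim_sim_app.sim_app_Lam)
next
  case (sim_app_Mu \<rho> j m p q)
  have "sim \<rho>' (case_nat (Some (unshift_idx k' j)) m') (substL p k (liftM 0 s)) (substL q k' (liftM 0 s'))"
  proof (rule sim_app_Mu.IH)
    show "sim \<rho>' (case_nat (Some (unshift_idx k' j)) m') (liftM 0 s) (liftM 0 s')"
      using sim_app_Mu.prems(6) by (rule sim_liftM_0)
  qed (use sim_app_Mu.prems in \<open>auto split: nat.split\<close>)
  then show ?case by (simp add: sim_sim_app.sim_app_Mu)
qed

lemma sim_substL_0:
  assumes "sim (case_nat 0 (Suc \<circ> \<rho>)) (map_option Suc \<circ> m) p q" and "sim \<rho> m s s'"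
  shows "sim \<rho> m (substL p 0 s) (substL q 0 s')"
  using assms(1) by (rule sim_substL(1))
    (use assms(2) in \<open>auto simp: unshift_idx_def option.map_comp o_def option.map_ident split: nat.split\<close>)

inductive_cases red1_VarE: "red1 (Var i) t'"
inductive_cases red1_LamE: "red1 (Lam t) t'"
inductive_cases red1_MuE: "red1 (Mu t) t'"
inductive_cases red1_MAppE: "red1 (MApp a t) t'"

lemma red1_AppE:
  assumes "red1 (App t u) v"
  obtains (beta) b where "t = Lam b" "v = substL b 0 u"
  | (mu) b where "t = Mu b" "v = Mu (msubst b 0 (liftM 0 u))"
  | (appL) t' where "v = App t' u" "red1 t t'"
  | (appR) u' where "v = App t u'" "red1 u u'"
  using assms by (cases rule: red1.cases) auto

inductive_cases sim_LamE: "sim \<rho> m u (Lam q)"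
inductive_cases sim_MuE: "sim \<rho> m u (Mu q)"

lemma sim_red1_beta:
  assumes "sim \<rho> m p (Lam b)" and "sim \<rho> m p' q'"
  shows "\<exists>u'. red1 (App p p') u' \<and> sim \<rho> m u' (substL b 0 q')"
proof -
  from assms(1) obtain a where "p = Lam a" "sim (case_nat 0 (Suc \<circ> \<rho>)) (map_option Suc \<circ> m) a b"
    by (auto elim: sim_LamE)
  with assms(2) show ?thesis
    by (blast intro: red1.beta sim_substL_0)
qed

lemma sim_red1_mu:
  assumes "sim \<rho> m p (Mu b)" and "sim \<rho> m p' q'"
  shows "\<exists>u'. red1 (App p p') u' \<and> sim \<rho> m u' (Mu (msubst b 0 (liftM 0 q')))"
proof -
  from assms(1) obtain a where a: "p = Mu a" "sim \<rho> (case_nat None m) a b"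
    by (auto elim: sim_MuE)
  have "sim \<rho> (case_nat None m) (msubst a 0 (liftM 0 p')) (msubst b 0 (liftM 0 q'))"
    using a(2) by (rule sim_msubst(1)) (simp_all add: sim_liftM_0 assms(2))
  with a(1) show ?thesis
    by (blast intro: red1.mu sim_sim_app.sim_Mu)
qed

lemma sim_app_absorbs_beta:
  assumes "sim \<rho> m p (Lam b)"
  shows "sim_app \<rho> m j p (substL b 0 (Var j))"
proof -
  from assms obtain a where a: "p = Lam a" "sim (case_nat 0 (Suc \<circ> \<rho>)) (map_option Suc \<circ> m) a b"
    by (auto elim: sim_LamE)
  have "sim (case_nat j \<rho>) m (renL (\<lambda>i. i) a) (substL b 0 (Var j))"
    unfolding substL_Var_eq_renL using a(2)
    by (rule sim_renL(1)) (auto simp: unshift_idx_def option.map_comp o_def option.map_ident split: nat.split)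
  with a(1) show ?thesis
    by (simp add: renL_ident sim_sim_app.sim_app_Lam)
qed

lemma sim_app_absorbs_mu:
  assumes "sim \<rho> m p (Mu b)"
  shows "sim_app \<rho> m j p (Mu (msubst b 0 (liftM 0 (Var j))))"
proof -
  from assms obtain a where a: "p = Mu a" "sim \<rho> (case_nat None m) a b"
    by (auto elim: sim_MuE)
  have "sim \<rho> (case_nat (Some j) m) a (msubst b 0 (Var j))"
    using a(2) by (rule sim_msubst_Var(1)) (simp_all split: nat.split)
  with a(1) show ?thesis
    by (simp add: sim_sim_app.sim_app_Mu)
qed

lemma sim_red1:
  shows "sim \<rho> m u v \<Longrightarrow> red1 v v' \<Longrightarrow> \<exists>u'. red1\<^sup>=\<^sup>= u u' \<and> sim \<rho> m u' v'"
    and "sim_app \<rho> m j u v \<Longrightarrow> red1 v v' \<Longrightarrow> \<exists>u'. red1\<^sup>=\<^sup>= u u' \<and> sim_app \<rho> m j u' v'"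
proof (induction arbitrary: v' and v' rule: sim_sim_app.inducts)
  case (sim_Var \<rho> m i)
  then show ?case by (auto elim: red1_VarE)
next
  case (sim_Lam \<rho> m p q)
  from sim_Lam.prems obtain q' where "v' = Lam q'" "red1 q q'"
    by (auto elim: red1_LamE)
  with sim_Lam.IH show ?case
    by (blast intro: red1.lam sim_sim_app.sim_Lam)
next
  case (sim_App \<rho> m p q p' q')
  from sim_App.prems show ?case
  proof (cases rule: red1_AppE)
    case (beta b)
    with sim_App.hyps sim_red1_beta show ?thesis by blast
  next
    case (mu b)
    with sim_App.hyps sim_red1_mu show ?thesis by blast
  next
    case (appL q2)
    with sim_App.IH(1) sim_App.hyps(2) show ?thesis
      by (blast intro: red1.appL sim_sim_app.sim_App)
  next
    case (appR q2)
    with sim_App.IH(2) sim_App.hyps(1) show ?thesis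
      by (blast intro: red1.appR sim_sim_app.sim_App)
  qed
next
  case (sim_Mu \<rho> m p q)
  from sim_Mu.prems obtain q' where "v' = Mu q'" "red1 q q'"
    by (auto elim: red1_MuE)
  with sim_Mu.IH show ?case
    by (blast intro: red1.muC sim_sim_app.sim_Mu)
next
  case (sim_MApp m b \<rho> p q)
  from sim_MApp.prems obtain q' where "v' = MApp b q'" "red1 q q'"
    by (auto elim: red1_MAppE)
  with sim_MApp.IH sim_MApp.hyps show ?case
    by (blast intro: red1.mapp sim_sim_app.sim_MApp)
next
  case (sim_MApp_marked m b j \<rho> p q)
  from sim_MApp_marked.prems obtain q' where "v' = MApp b q'" "red1 q q'"
    by (auto elim: red1_MAppE)
  with sim_MApp_marked.IH sim_MApp_marked.hyps show ?case
    by (blast intro: red1.mapp sim_sim_app.sim_MApp_marked)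
next
  case (sim_app_App \<rho> m p q j)
  from sim_app_App.prems show ?case
  proof (cases rule: red1_AppE)
    case (beta b)
    with sim_app_App.hyps sim_app_absorbs_beta show ?thesis by blast
  next
    case (mu b)
    with sim_app_App.hyps sim_app_absorbs_mu show ?thesis by blast
  next
    case (appL q2)
    with sim_app_App.IH show ?thesis
      by (blast intro: sim_sim_app.sim_app_App)
  next
    case (appR q2)
    then show ?thesis by (auto elim: red1_VarE)
  qed
next
  case (sim_app_Lam j \<rho> m p q)
  with sim_app_Lam.IH show ?case
    by (blast intro: red1.lam sim_sim_app.sim_app_Lam)
next
  case (sim_app_Mu \<rho> j m p q)
  from sim_app_Mu.prems obtain q' where "v' = Mu q'" "red1 q q'"
    by (auto elim: red1_MuE)
  with sim_app_Mu.IH show ?case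
    by (blast intro: red1.muC sim_sim_app.sim_app_Mu)
qed

inductive_cases sim_Lam_leftE: "sim \<rho> m (Lam p) v"
inductive_cases sim_Mu_leftE: "sim \<rho> m (Mu p) v"

lemma sim_reducible:
  shows "sim \<rho> m u v \<Longrightarrow> red1 u u' \<Longrightarrow> \<exists>v'. red1 v v'"
    and "sim_app \<rho> m j u v \<Longrightarrow> red1 u u' \<Longrightarrow> \<exists>v'. red1 v v'"
proof (induction arbitrary: u' and u' rule: sim_sim_app.inducts)
  case (sim_App \<rho> m p q p' q')
  from sim_App.prems show ?case
  proof (cases rule: red1_AppE)
    case (beta a)
    with sim_App.hyps(1) obtain b where "q = Lam b"
      by (auto elim: sim_Lam_leftE)
    then show ?thesis by (blast intro: red1.beta)
  next
    case (mu a)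
    with sim_App.hyps(1) obtain b where "q = Mu b"
      by (auto elim: sim_Mu_leftE)
    then show ?thesis by (blast intro: red1.mu)
  next
    case (appL p2)
    with sim_App.IH(1) show ?thesis by (blast intro: red1.appL)
  next
    case (appR p2)
    with sim_App.IH(2) show ?thesis by (blast intro: red1.appR)
  qed
qed (blast elim: red1_VarE red1_LamE red1_MuE red1_MAppE
    intro: red1.lam red1.appL red1.muC red1.mapp)+

lemma sim_normal:
  shows "sim \<rho> m u v \<Longrightarrow> normal v \<Longrightarrow> normal u"
    and "sim_app \<rho> m j u v \<Longrightarrow> normal v \<Longrightarrow> normal u"
  by (meson normal_def sim_reducible)+

lemma normalizable_if_reflclp_red1:
  assumes "red1\<^sup>=\<^sup>= u u'" and "normalizable u'"
  shows "normalizable u"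
proof -
  from assms(1) have "red1\<^sup>*\<^sup>* u u'" by blast
  with assms(2) show ?thesis
    unfolding normalizable_def by (meson rtranclp_trans)
qed

lemma normalizable_by_simulation:
  assumes sim_step: "\<And>u v v'. S u v \<Longrightarrow> red1 v v' \<Longrightarrow> \<exists>u'. red1\<^sup>=\<^sup>= u u' \<and> S u' v'"
    and nf: "\<And>u v. S u v \<Longrightarrow> normal v \<Longrightarrow> normal u"
    and "S u v" and "normalizable v"
  shows "normalizable u"
proof -
  from \<open>normalizable v\<close> obtain n where "red1\<^sup>*\<^sup>* v n" "normal n"
    unfolding normalizable_def by blast
  then show ?thesis using \<open>S u v\<close>
  proof (induction arbitrary: u rule: converse_rtranclp_induct)
    case base
    then show ?case
      using nf unfolding normalizable_def by blast
  next
    case (step v v')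
    then obtain u' where "red1\<^sup>=\<^sup>= u u'" "S u' v'"
      using sim_step by blast
    with step.IH step.prems(1) show ?case
      by (blast intro: normalizable_if_reflclp_red1)
  qed
qed

lemma sim_renL_self: "(\<And>b. m b = None) \<Longrightarrow> sim \<rho> m t (renL \<rho> t)"
proof (induction t arbitrary: \<rho> m)
  case (Lam t)
  then show ?case by (simp add: sim_sim_app.sim_Lam)
next
  case (Mu t)
  have "sim \<rho> (case_nat None m) t (renL \<rho> t)"
    by (rule Mu.IH) (simp add: Mu.prems split: nat.split)
  then show ?case by (simp add: sim_sim_app.sim_Mu)
qed (simp_all add: sim_sim_app.intros)

theorem mainTheorem13:
  fixes t :: trm and y :: nat
  assumes "normalizable (App t (Var y))"
  shows "normalizable t"
proof -
  have "sim (\<lambda>i. i) Map.empty t t"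
    using sim_renL_self[of Map.empty "\<lambda>i. i" t] by (simp add: renL_ident)
  then have "sim_app (\<lambda>i. i) Map.empty y t (App t (Var y))"
    by (rule sim_app_App)
  with sim_red1(2) sim_normal(2) show ?thesis
    using assms by (rule normalizable_by_simulation)
qed

end
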